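(* For $n\ge1$ and $0\le k\le n$: (a) the coefficients $b_{n,k}$ are integers; (b) $a_{n,k}\ge0$ and $b_{n,k}\ge0$; (c) $a_{n,k-1}\le a_{n,k}$ for $1\le k\le n$; (d) $a_{n,0}=(n-1)!$.
   Context: Let $V$ be the unique solution, in the ring of formal series $\sum_{n\ge0}q_n(y)x^{-n}$ with $q_n$ complex polynomials of degree $\le n$, of $V=1+\frac{y}{x}-\frac{1}{x}V-V_x-\frac{1}{x}V_y+\frac{1}{x}\log V$ (termwise formal derivatives $V_x,V_y$; formal logarithm series). Define polynomials $P_{n-1}$, $Q_n$ by $V=1+\sum_{n\ge1}P_{n-1}(y)x^{-n}$, $\log V=\sum_{n\ge1}Q_n(y)x^{-n}$; equivalently $P_0=y-1$ and $P_n=nP_{n-1}-P'_{n-1}+\frac1n\sum_{k=1}^{n-1}k\{(k-1)P_{k-1}-P_k-P'_{k-1}\}P_{n-k-1}$. For $n\ge1$ define $a_{n,k},b_{n,k}$ ($0\le k\le n$) by $P_n(y)=\frac{(-1)^{n+1}}{n!}\sum_{k=0}^n(-1)^ka_{n,k}y^{n-k}$ and $Q_n(y)=\frac{(-1)^{n+1}}{n!}\sum_{k=0}^n(-1)^kb_{n,k}y^{n-k}$. *)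

theory Defs
  imports "HOL-Computational_Algebra.Computational_Algebra"
begin

function P :: "nat \<Rightarrow> real poly" where
  "P 0 = [:-1, 1:]"
| "P (Suc m) =
     smult (real (Suc m)) (P m) - pderiv (P m)
     + smult (1 / real (Suc m))
         (\<Sum>k\<in>{1..m}. smult (real k)
             (smult (real k - 1) (P (k - 1)) - P k - pderiv (P (k - 1))) * P (Suc m - k - 1))"
  by pat_completeness auto
termination
  by (relation "measure id") auto

text \<open>W = V - 1 = sum_{n>=1} P_{n-1} t^n as a formal power series in t = 1/x
  with coefficients in real polynomials in y.\<close>
definition W :: "real poly fps" where
  "W = Abs_fps (\<lambda>n. if n = 0 then 0 else P (n - 1))"

text \<open>Q_n = coefficient of t^n in the formal logarithm
  log V = log (1 + W) = sum_{m>=1} (-1)^(m+1) W^m / m.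
  Only m \<le> n contribute since W has zero constant term.\<close>
definition Q :: "nat \<Rightarrow> real poly" where
  "Q n = (\<Sum>m\<in>{1..n}. smult ((-1) ^ (m + 1) / real m) (fps_nth (W ^ m) n))"

text \<open>P_n(y) = (-1)^(n+1)/n! * sum_k (-1)^k a_{n,k} y^(n-k), similarly for Q_n and b.\<close>
definition a :: "nat \<Rightarrow> nat \<Rightarrow> real" where
  "a n k = (-1) ^ (n + 1 + k) * fact n * coeff (P n) (n - k)"

definition b :: "nat \<Rightarrow> nat \<Rightarrow> real" where
  "b n k = (-1) ^ (n + 1 + k) * fact n * coeff (Q n) (n - k)"

end

theory Submission
  imports Defs
begin

text \<open>
  Put t = 1/x and V = 1 + W. The recursion for P_n says precisely that V (log V)_t = V_t;
  comparing coefficients gives Q_(n+1) = P_(n+1) - n P_n + P_n' and, by induction, that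
  n! P_n and n! Q_n have integer coefficients. Substituting this into the defining equation
  of V shows that Psi = -t V + t^2 V_t - t V_y + V_y satisfies V Psi = t Psi + V T(Psi) for an
  operator T that only shifts coefficients upwards, so Psi = 0. Coefficientwise this is
  P_(n+1)' = P_n' - n P_n, hence Q_n = P_n + P_n' and the leading coefficient of P_n is
  (-1)^(n+1)/n. In terms of the coefficients, b_(n,k) = a_(n,k) - (n-k+1) a_(n,k-1), so
  monotonicity follows from positivity. For positivity substitute y -> -y: log V becomes
  -log (1 - Y) for a series Y built from the earlier reflected P_i, and -P_(n+1)(-y) is a
  nonnegative combination of -P_n(-y), its derivative and -Q_(n+1)(-y), so nonnegativity of
  the coefficients propagates.
\<close>

lemma pderiv_sum: "pderiv (sum f A) = (\<Sum>i\<in>A. pderiv (f i))"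
  by (induct A rule: infinite_finite_induct) (auto simp: pderiv_add)

lemma smult_sum_right: "smult c (sum f A) = (\<Sum>i\<in>A. smult c (f i))"
  by (induct A rule: infinite_finite_induct) (simp_all add: smult_add_right)

definition fps_pderiv :: "'a::idom poly fps \<Rightarrow> 'a poly fps" where
  "fps_pderiv F = Abs_fps (\<lambda>n. pderiv (F $ n))"

lemma fps_pderiv_nth [simp]: "fps_pderiv F $ n = pderiv (F $ n)"
  by (simp add: fps_pderiv_def)

lemma fps_pderiv_0 [simp]: "fps_pderiv 0 = 0"
  by (rule fps_ext) simp

lemma fps_pderiv_add [simp]: "fps_pderiv (F + G) = fps_pderiv F + fps_pderiv G"
  by (rule fps_ext) (simp add: pderiv_add)

lemma fps_pderiv_diff [simp]: "fps_pderiv (F - G) = fps_pderiv F - fps_pderiv G"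
  by (rule fps_ext) (simp add: pderiv_diff)

lemma fps_pderiv_const [simp]: "fps_pderiv (fps_const p) = fps_const (pderiv p)"
  by (rule fps_ext) simp

lemma fps_pderiv_one [simp]: "fps_pderiv 1 = 0"
  by (rule fps_ext) (simp add: fps_one_nth)

lemma fps_pderiv_X [simp]: "fps_pderiv fps_X = 0"
  by (rule fps_ext) simp

lemma fps_pderiv_mult: "fps_pderiv (F * G) = fps_pderiv F * G + F * fps_pderiv G"
proof (rule fps_ext)
  fix n
  have "fps_pderiv (F * G) $ n
      = (\<Sum>i=0..n. pderiv (F $ i) * G $ (n - i)) + (\<Sum>i=0..n. F $ i * pderiv (G $ (n - i)))"
    by (simp add: fps_mult_nth pderiv_sum pderiv_mult sum.distrib[symmetric] algebra_simps)
  then show "fps_pderiv (F * G) $ n = (fps_pderiv F * G + F * fps_pderiv G) $ n"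
    by (simp add: fps_mult_nth)
qed

lemma fps_pderiv_X_mult [simp]: "fps_pderiv (fps_X * F) = fps_X * fps_pderiv F"
  by (simp add: fps_pderiv_mult)

lemma fps_pderiv_fps_deriv: "fps_pderiv (fps_deriv F) = fps_deriv (fps_pderiv F)"
  by (rule fps_ext) (simp add: of_nat_poly pderiv_smult)

definition fps_pcompose :: "'a::comm_semiring_1 poly fps \<Rightarrow> 'a poly \<Rightarrow> 'a poly fps" where
  "fps_pcompose F q = Abs_fps (\<lambda>n. pcompose (F $ n) q)"

lemma fps_pcompose_nth [simp]: "fps_pcompose F q $ n = pcompose (F $ n) q"
  by (simp add: fps_pcompose_def)

lemma fps_pcompose_mult: "fps_pcompose (F * G) q = fps_pcompose F q * fps_pcompose G q"
  by (rule fps_ext) (simp add: fps_mult_nth pcompose_sum pcompose_mult)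

lemma fps_pcompose_power: "fps_pcompose (F ^ m) q = fps_pcompose F q ^ m"
proof (induct m)
  case 0
  show ?case
    by (rule fps_ext) (simp add: fps_one_nth pcompose_1)
qed (simp add: fps_pcompose_mult)

lemma pderiv_pcompose_neg: "pderiv (pcompose p [:0, -1:]) = - pcompose (pderiv p) [:0, -1 :: 'a::idom:]"
  by (simp add: pderiv_pcompose pderiv_pCons one_pCons)

section \<open>The formal logarithm\<close>

definition fps_log1p :: "'a::field_char_0 poly fps \<Rightarrow> 'a poly fps" where
  "fps_log1p F = Abs_fps (\<lambda>n. \<Sum>m\<in>{1..n}. smult ((-1) ^ (m + 1) / of_nat m) ((F ^ m) $ n))"

lemma derivation_power:
  fixes D :: "'b::comm_ring_1 \<Rightarrow> 'b"
  assumes "\<And>G H. D (G * H) = D G * H + G * D H"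
  shows "D (F ^ Suc m) = of_nat (Suc m) * D F * F ^ m"
  by (induct m) (simp_all add: assms algebra_simps)

lemma fps_log1p_derivation:
  fixes F :: "'a::field_char_0 poly fps"
  assumes "F $ 0 = 0"
    and add: "\<And>G H. D (G + H) = D G + D H"
    and mult: "\<And>G H. D (G * H) = D G * H + G * D H"
    and const: "\<And>c. D (fps_const [:c:]) = 0"
    and local: "\<And>G H n. (\<And>i. i \<le> Suc n \<Longrightarrow> G $ i = H $ i) \<Longrightarrow> D G $ n = D H $ n"
  shows "(1 + F) * D (fps_log1p F) = D F"
proof (rule fps_ext)
  fix n
  define c where "c m = fps_const [:(-1) ^ (m + 1) / of_nat m :: 'a:]" for m
  define S where "S N = (\<Sum>m\<in>{1..N}. c m * F ^ m)" for N
  have F_pow_nth: "(F ^ m) $ i = 0" if "i < m" for i m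
    using startsby_zero_power_prefix[OF assms(1)] that by blast
  have c_mult_nth: "(c m * G) $ i = smult ((-1) ^ (m + 1) / of_nat m) (G $ i)" for m G i
    by (simp add: c_def)
  have S_nth: "S N $ i = fps_log1p F $ i" if "i \<le> N" for N i
  proof -
    have "S N $ i = (\<Sum>m\<in>{1..i}. smult ((-1) ^ (m + 1) / of_nat m) ((F ^ m) $ i))"
      unfolding S_def fps_sum_nth c_mult_nth
      by (rule sum.mono_neutral_right) (use that in \<open>auto simp: c_mult_nth F_pow_nth\<close>)
    then show ?thesis by (simp add: fps_log1p_def)
  qed
  have D_zero: "D 0 = 0"
    using add[of 0 0] by simp
  have c_mult: "c (Suc m) * of_nat (Suc m) = (-1) ^ m" for m
  proof -
    have "c (Suc m) * of_nat (Suc m) = fps_const ([:(-1) ^ m / of_nat (Suc m) :: 'a:] * [:of_nat (Suc m):])"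
      by (simp add: c_def fps_of_nat[symmetric] of_nat_poly fps_const_mult[symmetric] del: of_nat_Suc)
    also have "\<dots> = fps_const [:-1:] ^ m"
      by (simp add: poly_const_pow del: of_nat_Suc)
    also have "fps_const [:-1 :: 'a:] = -1"
      by (simp add: one_pCons)
    finally show ?thesis .
  qed
  have D_S: "D (S N) = D F * (\<Sum>i<N. (- F) ^ i)" for N
  proof (induct N)
    case 0
    then show ?case by (simp add: S_def D_zero)
  next
    case (Suc N)
    have "D (c (Suc N) * F ^ Suc N) = c (Suc N) * D (F ^ Suc N)"
      by (simp add: mult const c_def)
    also have "\<dots> = (c (Suc N) * of_nat (Suc N)) * (D F * F ^ N)"
      by (simp only: derivation_power[of D, OF mult] mult.assoc)
    also have "\<dots> = D F * (- F) ^ N"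
      by (subst c_mult) (simp only: power_minus[of F] mult.commute mult.left_commute)
    finally have "D (c (Suc N) * F ^ Suc N) = D F * (- F) ^ N" .
    moreover have "S (Suc N) = S N + c (Suc N) * F ^ Suc N"
      by (simp add: S_def)
    ultimately show ?case
      using Suc by (simp add: add distrib_left)
  qed
  have geometric: "(1 + F) * D (S (Suc n)) = D F * (1 - (- F) ^ Suc n)"
    by (simp add: D_S one_diff_power_eq[of "- F"] mult.left_commute[of "1 + F"] del: power_Suc)
  have tail: "(D F * (- F) ^ Suc n) $ n = 0"
    using startsby_zero_power_prefix[of "- F" "Suc n"] assms(1)
    unfolding fps_mult_nth by (intro sum.neutral) auto
  \<comment> \<open>\<open>D\<close> looks at most one coefficient ahead, so only the truncation \<open>S (Suc n)\<close> matters.\<close>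
  have "((1 + F) * D (fps_log1p F)) $ n = ((1 + F) * D (S (Suc n))) $ n"
    unfolding fps_mult_nth by (intro sum.cong refl arg_cong2[where f = "(*)"] local) (simp add: S_nth)
  also have "\<dots> = D F $ n"
    by (simp add: geometric right_diff_distrib tail del: power_Suc)
  finally show "((1 + F) * D (fps_log1p F)) $ n = D F $ n" .
qed

lemma fps_pcompose_log1p:
  fixes F :: "'a::field_char_0 poly fps"
  shows "fps_pcompose (fps_log1p F) q = fps_log1p (fps_pcompose F q)"
  by (rule fps_ext) (simp add: fps_log1p_def pcompose_sum pcompose_smult pcompose_uminus fps_pcompose_power[symmetric])

definition int_coeffs :: "'a::ring_1 poly \<Rightarrow> bool" where
  "int_coeffs p \<longleftrightarrow> (\<forall>i. coeff p i \<in> \<int>)"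

lemma int_coeffs_add: "int_coeffs p \<Longrightarrow> int_coeffs q \<Longrightarrow> int_coeffs (p + q)"
  by (simp add: int_coeffs_def)

lemma int_coeffs_diff: "int_coeffs p \<Longrightarrow> int_coeffs q \<Longrightarrow> int_coeffs (p - q)"
  by (simp add: int_coeffs_def)

lemma int_coeffs_smult: "c \<in> \<int> \<Longrightarrow> int_coeffs p \<Longrightarrow> int_coeffs (smult c p)"
  by (simp add: int_coeffs_def)

lemma int_coeffs_mult: "int_coeffs p \<Longrightarrow> int_coeffs q \<Longrightarrow> int_coeffs (p * q)"
  by (simp add: int_coeffs_def coeff_mult Ints_sum)

lemma int_coeffs_sum: "(\<And>i. i \<in> A \<Longrightarrow> int_coeffs (f i)) \<Longrightarrow> int_coeffs (sum f A)"
  by (simp add: int_coeffs_def coeff_sum Ints_sum)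

lemma int_coeffs_pderiv: "int_coeffs (p :: 'a::idom poly) \<Longrightarrow> int_coeffs (pderiv p)"
  by (simp add: int_coeffs_def coeff_pderiv)

definition nonneg_coeffs :: "'a::linordered_idom poly \<Rightarrow> bool" where
  "nonneg_coeffs p \<longleftrightarrow> (\<forall>i. 0 \<le> coeff p i)"

lemma nonneg_coeffs_add: "nonneg_coeffs p \<Longrightarrow> nonneg_coeffs q \<Longrightarrow> nonneg_coeffs (p + q)"
  by (simp add: nonneg_coeffs_def)

lemma nonneg_coeffs_smult: "0 \<le> c \<Longrightarrow> nonneg_coeffs p \<Longrightarrow> nonneg_coeffs (smult c p)"
  by (simp add: nonneg_coeffs_def)

lemma nonneg_coeffs_mult: "nonneg_coeffs p \<Longrightarrow> nonneg_coeffs q \<Longrightarrow> nonneg_coeffs (p * q)"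
  by (simp add: nonneg_coeffs_def coeff_mult sum_nonneg)

lemma nonneg_coeffs_sum: "(\<And>i. i \<in> A \<Longrightarrow> nonneg_coeffs (f i)) \<Longrightarrow> nonneg_coeffs (sum f A)"
  by (simp add: nonneg_coeffs_def coeff_sum sum_nonneg)

lemma nonneg_coeffs_pderiv: "nonneg_coeffs p \<Longrightarrow> nonneg_coeffs (pderiv p)"
  by (simp add: nonneg_coeffs_def coeff_pderiv)

lemma nonneg_coeffs_fps_power_nth:
  assumes "\<And>i. i \<le> n \<Longrightarrow> nonneg_coeffs (F $ i)"
  shows "nonneg_coeffs ((F ^ m) $ n)"
  using assms
proof (induct m arbitrary: n)
  case 0
  then show ?case
    by (simp add: nonneg_coeffs_def fps_one_nth coeff_1)
next
  case (Suc m)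
  then show ?case
    unfolding power_Suc fps_mult_nth by (intro nonneg_coeffs_sum nonneg_coeffs_mult) auto
qed

lemma nonneg_coeffs_neg_log1p_neg:
  fixes F :: "'a::linordered_field poly fps"
  assumes "\<And>i. i \<le> n \<Longrightarrow> nonneg_coeffs (F $ i)"
  shows "nonneg_coeffs (- fps_log1p (- F) $ n)"
proof -
  have "smult ((-1) ^ (m + 1) / of_nat m) (((- F) ^ m) $ n) = - smult (1 / of_nat m) ((F ^ m) $ n)" for m
    by (cases "even m") (simp_all add: power_minus[of F])
  then have "- fps_log1p (- F) $ n = (\<Sum>m\<in>{1..n}. smult (1 / of_nat m) ((F ^ m) $ n))"
    by (simp add: fps_log1p_def sum_negf[symmetric])
  then show ?thesis
    using assms by (auto intro!: nonneg_coeffs_sum nonneg_coeffs_smult nonneg_coeffs_fps_power_nth)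
qed

section \<open>The recursion as a logarithmic derivative\<close>

declare P.simps(2) [simp del]

lemma W_nth: "W $ n = (if n = 0 then 0 else P (n - 1))"
  by (simp add: W_def)

lemma fps_log1p_W_nth [simp]: "fps_log1p W $ n = Q n"
  by (simp add: fps_log1p_def Q_def)

lemma W_log_deriv: "(1 + W) * fps_deriv (fps_log1p W) = fps_deriv W"
  by (rule fps_log1p_derivation) (simp_all add: W_nth)

lemma W_log_pderiv: "(1 + W) * fps_pderiv (fps_log1p W) = fps_pderiv W"
  by (rule fps_log1p_derivation) (simp_all add: W_nth fps_pderiv_mult)

lemma Q_Suc_recurrence:
  "smult (real (Suc m)) (Q (Suc m))
     = smult (real (Suc m)) (P m) - (\<Sum>k\<in>{1..m}. smult (real k) (Q k * P (m - k)))"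
proof -
  have "((1 + W) * fps_deriv (fps_log1p W)) $ m
      = smult (real (Suc m)) (Q (Suc m)) + (\<Sum>i\<in>{1..m}. smult (real (Suc (m - i))) (P (i - 1) * Q (Suc (m - i))))"
    by (simp add: fps_mult_nth sum.atLeast_Suc_atMost W_nth fps_one_nth of_nat_poly del: of_nat_Suc)
  also have "(\<Sum>i\<in>{1..m}. smult (real (Suc (m - i))) (P (i - 1) * Q (Suc (m - i))))
      = (\<Sum>k\<in>{1..m}. smult (real k) (Q k * P (m - k)))"
    by (subst sum.atLeastAtMost_rev) (rule sum.cong, auto simp: Suc_diff_le mult.commute)
  finally show ?thesis
    using arg_cong[where f = "\<lambda>F. F $ m", OF W_log_deriv] by (simp add: W_nth of_nat_poly)
qed

lemma P_Suc_Q: "P (Suc m) = smult (real m) (P m) - pderiv (P m) + Q (Suc m)"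
proof (induct m rule: less_induct)
  case (less m)
  have sum_eq: "(\<Sum>k\<in>{1..m}. smult (real k)
          (smult (real k - 1) (P (k - 1)) - P k - pderiv (P (k - 1))) * P (Suc m - k - 1))
      = - (\<Sum>k\<in>{1..m}. smult (real k) (Q k * P (m - k)))"
    unfolding sum_negf[symmetric]
  proof (rule sum.cong)
    fix k assume "k \<in> {1..m}"
    then obtain j where k: "k = Suc j" and "j < m" by (cases k) auto
    with less have Q_k: "Q (Suc j) = P (Suc j) - smult (real j) (P j) + pderiv (P j)"
      by simp
    show "smult (real k) (smult (real k - 1) (P (k - 1)) - P k - pderiv (P (k - 1))) * P (Suc m - k - 1)
        = - smult (real k) (Q k * P (m - k))"
      by (simp add: k Q_k smult_add_right smult_diff_right algebra_simps)
  qed simp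
  define S where "S = (\<Sum>k\<in>{1..m}. smult (real k) (Q k * P (m - k)))"
  have "P (Suc m) = smult (real (Suc m)) (P m) - pderiv (P m) - smult (1 / real (Suc m)) S"
    unfolding P.simps(2) sum_eq by (simp add: S_def)
  moreover have "Q (Suc m) = P m - smult (1 / real (Suc m)) S"
    using arg_cong[where f = "smult (1 / real (Suc m))", OF Q_Suc_recurrence[of m]]
    by (simp add: S_def smult_diff_right del: of_nat_Suc)
  ultimately show ?case
    by (simp add: smult_add_left)
qed

lemma fact_Q_Suc:
  "smult (fact (Suc j)) (Q (Suc j))
     = smult (real (Suc j)) (smult (fact j) (P j))
       - (\<Sum>k\<in>{1..j}. smult (real (k * (j choose k)))
            (smult (fact k) (Q k) * smult (fact (j - k)) (P (j - k))))"
proof -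
  have "smult (fact (Suc j)) (Q (Suc j)) = smult (fact j) (smult (real (Suc j)) (Q (Suc j)))"
    by (simp add: smult_smult mult.commute del: of_nat_Suc)
  also have "\<dots> = smult (fact j) (smult (real (Suc j)) (P j))
      - (\<Sum>k\<in>{1..j}. smult (fact j * real k) (Q k * P (j - k)))"
    by (simp add: Q_Suc_recurrence smult_diff_right smult_sum_right smult_smult del: of_nat_Suc)
  also have "(\<Sum>k\<in>{1..j}. smult (fact j * real k) (Q k * P (j - k)))
      = (\<Sum>k\<in>{1..j}. smult (real (k * (j choose k))) (smult (fact k) (Q k) * smult (fact (j - k)) (P (j - k))))"
    by (intro sum.cong refl) (simp add: binomial_fact smult_smult field_simps)
  finally show ?thesis
    by (simp add: smult_smult mult.commute)
qed

lemma fact_P_Q_int_coeffs: "int_coeffs (smult (fact n) (P n)) \<and> int_coeffs (smult (fact n) (Q n))"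
proof (induct n rule: less_induct)
  case (less n)
  show ?case
  proof (cases n)
    case 0
    then show ?thesis
      by (auto simp: int_coeffs_def Q_def coeff_pCons split: nat.split)
  next
    case (Suc j)
    then have IH: "int_coeffs (smult (fact i) (P i))" "int_coeffs (smult (fact i) (Q i))" if "i \<le> j" for i
      using less that by auto
    have Q_int: "int_coeffs (smult (fact (Suc j)) (Q (Suc j)))"
      unfolding fact_Q_Suc
      by (intro int_coeffs_diff int_coeffs_smult int_coeffs_sum int_coeffs_mult IH) auto
    have P_expand: "smult (fact (Suc j)) (P (Suc j))
        = smult (real (Suc j * j)) (smult (fact j) (P j))
          - smult (real (Suc j)) (pderiv (smult (fact j) (P j)))
          + smult (fact (Suc j)) (Q (Suc j))"
      by (simp add: P_Suc_Q smult_add_right smult_diff_right smult_smult pderiv_smult algebra_simps)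
    have "int_coeffs (smult (fact (Suc j)) (P (Suc j)))"
      unfolding P_expand
      by (intro int_coeffs_add int_coeffs_diff int_coeffs_smult int_coeffs_pderiv Q_int IH) auto
    with Q_int Suc show ?thesis
      by simp
  qed
qed

section \<open>The differential equation\<close>

text \<open>In the variable t = 1/x one has -V_x = t^2 V_t, so T V is the part -V/x - V_x - V_y/x
  of the defining equation of V.\<close>

definition T :: "'a::idom poly fps \<Rightarrow> 'a poly fps" where
  "T F = fps_X * (fps_X * fps_deriv F - F - fps_pderiv F)"

lemma T_0 [simp]: "T 0 = 0"
  by (simp add: T_def)

lemma T_nth_0 [simp]: "T F $ 0 = 0"
  by (simp add: T_def)

lemma T_nth_Suc: "T F $ Suc m = smult (of_nat m - 1) (F $ m) - pderiv (F $ m)"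
  by (cases m) (simp_all add: T_def of_nat_poly smult_diff_left del: of_nat_Suc)

lemma T_add: "T (F + G) = T F + T G"
  by (simp add: T_def algebra_simps)

lemma fps_pderiv_T: "fps_pderiv (T F) = T (fps_pderiv F)"
  by (simp add: T_def fps_pderiv_mult fps_pderiv_fps_deriv)

lemma V_equation: "1 + W = 1 + fps_const [:0, 1:] * fps_X + fps_X * fps_log1p W + T (1 + W)"
proof (rule fps_ext)
  fix n
  show "(1 + W) $ n = (1 + fps_const [:0, 1:] * fps_X + fps_X * fps_log1p W + T (1 + W)) $ n"
  proof (cases n)
    case (Suc m)
    then show ?thesis
      by (cases m) (simp_all add: W_nth T_nth_Suc P_Suc_Q Q_def one_pCons fps_one_nth)
  qed (simp add: W_nth)
qed

lemma W_pde: "T (1 + W) + fps_pderiv (1 + W) = 0"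
proof -
  define V where "V = 1 + W"
  define L where "L = fps_log1p W"
  define Psi where "Psi = T V + fps_pderiv V"
  have "Psi = T (1 + fps_const [:0, 1:] * fps_X) + fps_pderiv (fps_const [:0, 1:] * fps_X)
      + (T (fps_X * L) + fps_X * fps_pderiv L) + T Psi"
    unfolding Psi_def V_def
    by (subst (1 2) V_equation) (simp add: T_add fps_pderiv_T L_def algebra_simps)
  also have "T (1 + fps_const [:0, 1:] * fps_X) + fps_pderiv (fps_const [:0, 1:] * fps_X) = - fps_X * fps_X"
    by (simp add: T_def fps_pderiv_mult pderiv_pCons algebra_simps)
  finally have Psi_eq: "Psi = - fps_X * fps_X + (T (fps_X * L) + fps_X * fps_pderiv L) + T Psi" .
  have "V * (T (fps_X * L) + fps_X * fps_pderiv L)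
      = fps_X ^ 3 * (V * fps_deriv L) + (fps_X - fps_X ^ 2) * (V * fps_pderiv L)"
    by (simp add: T_def fps_pderiv_mult algebra_simps power2_eq_square power3_eq_cube)
  also have "\<dots> = fps_X ^ 3 * fps_deriv W + (fps_X - fps_X ^ 2) * fps_pderiv W"
    by (simp only: V_def L_def W_log_deriv W_log_pderiv)
  also have "\<dots> = fps_X * (Psi + fps_X * V)"
    by (simp add: V_def Psi_def T_def algebra_simps power2_eq_square power3_eq_cube)
  finally have log_terms: "V * (T (fps_X * L) + fps_X * fps_pderiv L) = fps_X * (Psi + fps_X * V)" .
  have "V * Psi = V * (- fps_X * fps_X + (T (fps_X * L) + fps_X * fps_pderiv L) + T Psi)"
    using Psi_eq by (rule arg_cong)
  also have "\<dots> = V * (- fps_X * fps_X) + V * (T (fps_X * L) + fps_X * fps_pderiv L) + V * T Psi"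
    by (simp add: algebra_simps)
  also have "\<dots> = fps_X * Psi + V * T Psi"
    unfolding log_terms by (simp add: algebra_simps)
  finally have "V * Psi = fps_X * Psi + V * T Psi" .
  then have Psi_fix: "Psi = fps_X * Psi + V * T Psi - W * Psi"
    by (simp add: V_def algebra_simps)
  \<comment> \<open>Every coefficient on the right involves only lower coefficients of \<open>Psi\<close>.\<close>
  have "Psi $ n = 0" for n
  proof (induct n rule: less_induct)
    case (less n)
    have "(fps_X * Psi) $ n = 0"
      using less by (cases n) simp_all
    moreover have "T Psi $ j = 0" if "j \<le> n" for j
      using that less by (cases j) (simp_all add: T_nth_Suc)
    then have "(V * T Psi) $ n = 0"
      by (simp add: fps_mult_nth)
    moreover have "(W * Psi) $ n = 0"
      unfolding fps_mult_nth by (intro sum.neutral) (use less in \<open>auto simp: W_nth\<close>)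
    ultimately show ?case
      by (subst Psi_fix) simp
  qed
  then show ?thesis
    by (simp add: Psi_def V_def fps_ext)
qed

lemma pderiv_P_Suc: "pderiv (P (Suc m)) = pderiv (P m) - smult (real m) (P m)"
  using arg_cong[where f = "\<lambda>F. F $ Suc (Suc m)", OF W_pde]
  by (simp add: T_nth_Suc W_nth algebra_simps)

lemma Q_Suc_eq: "Q (Suc m) = P (Suc m) + pderiv (P (Suc m))"
  using P_Suc_Q[of m] pderiv_P_Suc[of m] by (simp add: algebra_simps)

lemma coeff_P_Suc_top:
  "Suc m \<le> i \<Longrightarrow> coeff (P (Suc m)) i = (if i = Suc m then (-1) ^ m / real (Suc m) else 0)"
proof (induct m arbitrary: i)
  case 0
  then obtain j where i: "i = Suc j"
    by (cases i) auto
  have "real (Suc j) * coeff (P 1) (Suc j) = real (Suc j) * coeff (P 0) (Suc j)"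
    using arg_cong[where f = "\<lambda>p. coeff p j", OF pderiv_P_Suc[of 0]] by (simp add: coeff_pderiv)
  then show ?case
    by (simp add: i coeff_pCons split: nat.split del: of_nat_Suc)
next
  case (Suc m)
  then obtain j where i: "i = Suc j" and "Suc m \<le> j"
    by (cases i) auto
  have "real (Suc j) * coeff (P (Suc (Suc m))) (Suc j)
      = real (Suc j) * coeff (P (Suc m)) (Suc j) - real (Suc m) * coeff (P (Suc m)) j"
    using arg_cong[where f = "\<lambda>p. coeff p j", OF pderiv_P_Suc[of "Suc m"]] by (simp add: coeff_pderiv)
  with Suc.hyps[of j] Suc.hyps[of "Suc j"] \<open>Suc m \<le> j\<close> show ?case
    by (auto simp: i field_simps simp del: of_nat_Suc)
qed

section \<open>Positivity\<close>

text \<open>Pbar n y = - P n (-y), so that a n k is n! times a coefficient of Pbar n.\<close>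

definition Pbar :: "nat \<Rightarrow> real poly" where
  "Pbar n = - pcompose (P n) [:0, -1:]"

definition Qbar :: "nat \<Rightarrow> real poly" where
  "Qbar n = - pcompose (Q n) [:0, -1:]"

lemma coeff_Pbar: "coeff (Pbar n) i = - ((-1) ^ i * coeff (P n) i)"
  by (simp add: Pbar_def coeff_pcompose_linear)

lemma coeff_Qbar: "coeff (Qbar n) i = - ((-1) ^ i * coeff (Q n) i)"
  by (simp add: Qbar_def coeff_pcompose_linear)

lemma Pbar_Suc: "Pbar (Suc m) = smult (real m) (Pbar m) + pderiv (Pbar m) + Qbar (Suc m)"
  by (simp add: Pbar_def Qbar_def P_Suc_Q pcompose_add pcompose_diff pcompose_smult
      pderiv_pcompose_neg pderiv_minus)

lemma Qbar_Suc: "Qbar (Suc m) = Pbar (Suc m) - pderiv (Pbar (Suc m))"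
  by (simp add: Pbar_def Qbar_def Q_Suc_eq pcompose_add pderiv_pcompose_neg pderiv_minus)

lemma Qbar_eq_neg_log1p_neg:
  "Qbar n = - fps_log1p (- Abs_fps (\<lambda>i. if i = 0 then 0 else Pbar (i - 1))) $ n"
proof -
  have "- Abs_fps (\<lambda>i. if i = 0 then 0 else Pbar (i - 1)) = fps_pcompose W [:0, -1:]"
    by (rule fps_ext) (simp add: Pbar_def W_nth)
  then show ?thesis
    by (simp add: Qbar_def fps_pcompose_log1p[symmetric])
qed

lemma nonneg_coeffs_Pbar: "nonneg_coeffs (Pbar n)"
proof (induct n rule: less_induct)
  case (less n)
  show ?case
  proof (cases n)
    case 0
    then show ?thesis
      by (auto simp: nonneg_coeffs_def coeff_Pbar coeff_pCons split: nat.split)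
  next
    case (Suc m)
    have "nonneg_coeffs (Qbar (Suc m))"
      unfolding Qbar_eq_neg_log1p_neg
      by (rule nonneg_coeffs_neg_log1p_neg) (use less Suc in \<open>auto simp: nonneg_coeffs_def\<close>)
    with less Suc show ?thesis
      by (auto simp: Pbar_Suc intro!: nonneg_coeffs_add nonneg_coeffs_smult nonneg_coeffs_pderiv)
  qed
qed

lemma nonneg_coeffs_Qbar: "nonneg_coeffs (Qbar n)"
  unfolding Qbar_eq_neg_log1p_neg
  by (rule nonneg_coeffs_neg_log1p_neg) (simp add: nonneg_coeffs_Pbar nonneg_coeffs_def[of 0])

lemma neg_one_power_add_eq_diff: "k \<le> n \<Longrightarrow> (-1 :: 'a::ring_1) ^ (n + k) = (-1) ^ (n - k)"
proof -
  assume "k \<le> n"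
  then have "(-1 :: 'a) ^ (n + k) = (-1) ^ ((n - k) + 2 * k)"
    by (simp add: algebra_simps)
  also have "\<dots> = (-1) ^ (n - k)"
    by (simp add: power_add power_mult)
  finally show ?thesis .
qed

lemma a_eq_Pbar: "k \<le> n \<Longrightarrow> a n k = fact n * coeff (Pbar n) (n - k)"
  by (simp add: a_def coeff_Pbar neg_one_power_add_eq_diff)

lemma b_eq_Qbar: "k \<le> n \<Longrightarrow> b n k = fact n * coeff (Qbar n) (n - k)"
  by (simp add: b_def coeff_Qbar neg_one_power_add_eq_diff)

lemma b_in_Ints: "b n k \<in> \<int>"
proof -
  have "coeff (smult (fact n) (Q n)) (n - k) \<in> \<int>"
    using fact_P_Q_int_coeffs[of n] by (simp add: int_coeffs_def)
  then show ?thesis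
    by (simp add: b_def mult.assoc)
qed

lemma a_nonneg: "k \<le> n \<Longrightarrow> 0 \<le> a n k"
  using nonneg_coeffs_Pbar[of n] by (simp add: a_eq_Pbar nonneg_coeffs_def)

lemma b_nonneg: "k \<le> n \<Longrightarrow> 0 \<le> b n k"
  using nonneg_coeffs_Qbar[of n] by (simp add: b_eq_Qbar nonneg_coeffs_def)

lemma b_eq_a: "1 \<le> k \<Longrightarrow> k \<le> n \<Longrightarrow> b n k = a n k - real (Suc (n - k)) * a n (k - 1)"
proof -
  assume "1 \<le> k" "k \<le> n"
  then obtain m where n: "n = Suc m"
    by (cases n) auto
  have coeff_eq: "coeff (Qbar n) (n - k)
      = coeff (Pbar n) (n - k) - real (Suc (n - k)) * coeff (Pbar n) (n - (k - 1))"
    using \<open>1 \<le> k\<close> \<open>k \<le> n\<close> by (simp add: n Qbar_Suc coeff_pderiv Suc_diff_le del: of_nat_Suc)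
  have "k - 1 \<le> n"
    using \<open>k \<le> n\<close> by simp
  show ?thesis
    unfolding b_eq_Qbar[OF \<open>k \<le> n\<close>] coeff_eq a_eq_Pbar[OF \<open>k \<le> n\<close>] a_eq_Pbar[OF \<open>k - 1 \<le> n\<close>]
    by (simp add: algebra_simps del: of_nat_Suc)
qed

lemma a_mono: "1 \<le> k \<Longrightarrow> k \<le> n \<Longrightarrow> a n (k - 1) \<le> a n k"
proof -
  assume k: "1 \<le> k" "k \<le> n"
  have "a n (k - 1) \<le> real (Suc (n - k)) * a n (k - 1)"
    using mult_right_mono[of 1 "real (Suc (n - k))" "a n (k - 1)"] a_nonneg[of "k - 1" n] k by simp
  also have "\<dots> \<le> a n k"
    using b_eq_a[OF k] b_nonneg[of k n] k by simp
  finally show ?thesis .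
qed

lemma a_0: "1 \<le> n \<Longrightarrow> a n 0 = fact (n - 1)"
proof -
  assume "1 \<le> n"
  then obtain m where n: "n = Suc m"
    by (cases n) auto
  have "a n 0 = (-1) ^ m * (-1) ^ m * (fact (Suc m) / real (Suc m))"
    by (simp add: n a_def coeff_P_Suc_top power_add del: of_nat_Suc)
  also have "\<dots> = fact m"
    by (simp add: power_add[symmetric] fact_Suc del: of_nat_Suc)
  finally show ?thesis
    by (simp add: n)
qed

theorem theorem4p10:
  fixes n k :: nat
  assumes "1 \<le> n" and "k \<le> n"
  shows "b n k \<in> \<int> \<and> a n k \<ge> 0 \<and> b n k \<ge> 0
         \<and> (1 \<le> k \<longrightarrow> a n (k - 1) \<le> a n k)
         \<and> a n 0 = fact (n - 1)"
  using assms b_in_Ints a_nonneg b_nonneg a_mono a_0 by blast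

end
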